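(* Let $N_\mathrm{T},N_\mathrm{R},G,L$ be positive integers, $N_\mathrm{S}=GL$, $\mathbf{H}_\mathrm{D}\in\mathbb{C}^{N_\mathrm{R}\times N_\mathrm{T}}$, $\mathbf{H}_\mathrm{B}\in\mathbb{C}^{N_\mathrm{R}\times N_\mathrm{S}}$, $\mathbf{H}_\mathrm{F}\in\mathbb{C}^{N_\mathrm{S}\times N_\mathrm{T}}$, with blocks $\mathbf{H}_{\mathrm{B},g}$ (columns $(g-1)L+1,\ldots,gL$ of $\mathbf{H}_\mathrm{B}$) and $\mathbf{H}_{\mathrm{F},g}$ (rows $(g-1)L+1,\ldots,gL$ of $\mathbf{H}_\mathrm{F}$). Consider the problem of maximizing $\phi(\mathbf{\Theta})=\lVert\mathbf{H}_\mathrm{D}+\mathbf{H}_\mathrm{B}\mathbf{\Theta}\mathbf{H}_\mathrm{F}\rVert_\mathrm{F}^2$ over $\mathbf{\Theta}=\mathrm{diag}(\mathbf{\Theta}_1,\ldots,\mathbf{\Theta}_G)$ subject to $\mathbf{\Theta}_g^\mathsf{H}\mathbf{\Theta}_g=\mathbf{I}$ for all $g$. Starting from any feasible $\mathbf{\Theta}^{(0)}$, for $r=0,1,2,\ldots$ and $g=1,\ldots,G$ in turn, set $$\mathbf{M}_g^{(r)}=\mathbf{H}_{\mathrm{B},g}^\mathsf{H}\Bigl(\mathbf{H}_\mathrm{D}+\mathbf{H}_\mathrm{B}\,\mathrm{diag}\bigl(\mathbf{\Theta}_1^{(r+1)},\ldots,\mathbf{\Theta}_{g-1}^{(r+1)},\mathbf{\Theta}_g^{(r)},\ldots,\mathbf{\Theta}_G^{(r)}\bigr)\mathbf{H}_\mathrm{F}\Bigr)\mathbf{H}_{\mathrm{F},g}^\mathsf{H},$$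 and $\mathbf{\Theta}_g^{(r+1)}=\mathbf{U}_g^{(r)}\mathbf{V}_g^{(r)\mathsf{H}}$, where $\mathbf{U}_g^{(r)},\mathbf{V}_g^{(r)}$ are any left and right singular matrices of $\mathbf{M}_g^{(r)}$ (so that $\mathbf{\Theta}_g^{(r+1)}=\arg\min_{\mathbf{X}_g\in\mathbb{U}^{L\times L}}\lVert\mathbf{M}_g^{(r)}-\mathbf{X}_g\rVert_\mathrm{F}$). Then the objective $\phi$ is monotonically non-decreasing along the iterations (and the sequence of objective values converges). Moreover, when the matrices $\mathbf{M}_g^{(r)}$ converge, the limiting solution $\mathbf{\Theta}'$ is a stationary point of the problem, i.e., for every $g$ there is a matrix $\mathbf{\Lambda}_g$ with $\mathbf{H}_{\mathrm{B},g}^\mathsf{H}(\mathbf{H}_\mathrm{D}+\mathbf{H}_\mathrm{B}\mathbf{\Theta}'\mathbf{H}_\mathrm{F})\mathbf{H}_{\mathrm{F},g}^\mathsf{H}-\mathbf{\Theta}'_g\mathbf{\Lambda}_g^\mathsf{H}=\mathbf{0}$ (the KKT stationarity condition), so the objective converges towards its value at a stationary point.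
   Context: $\mathbb{U}^{L\times L}$ is the set of $L\times L$ complex unitary matrices; $\mathrm{diag}(\cdot)$ builds a block-diagonal matrix; $\lVert\cdot\rVert_\mathrm{F}$ is the Frobenius norm. *)

theory Defs
  imports "HOL-Analysis.Analysis" "Jordan_Normal_Form.Matrix"
begin

text \<open>Complex matrices are Jordan_Normal_Form matrices of type complex mat with
explicit dimensions.  Block indices g range over 0..G-1 (0-based).\<close>

definition ctrans :: "complex mat \<Rightarrow> complex mat" where
  "ctrans A = mat (dim_col A) (dim_row A) (\<lambda>(i,j). cnj (A $$ (j,i)))"

definition unitary_mat :: "nat \<Rightarrow> complex mat \<Rightarrow> bool" where
  "unitary_mat L X \<longleftrightarrow> X \<in> carrier_mat L L \<and> ctrans X * X = 1\<^sub>m L"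

definition frob2 :: "complex mat \<Rightarrow> real" where
  "frob2 A = (\<Sum>i<dim_row A. \<Sum>j<dim_col A. (cmod (A $$ (i,j)))\<^sup>2)"

definition col_block :: "nat \<Rightarrow> complex mat \<Rightarrow> nat \<Rightarrow> complex mat" where
  "col_block L HB g = mat (dim_row HB) L (\<lambda>(i,j). HB $$ (i, g * L + j))"

definition row_block :: "nat \<Rightarrow> complex mat \<Rightarrow> nat \<Rightarrow> complex mat" where
  "row_block L HF g = mat L (dim_col HF) (\<lambda>(i,j). HF $$ (g * L + i, j))"

definition blkdiag :: "nat \<Rightarrow> nat \<Rightarrow> (nat \<Rightarrow> complex mat) \<Rightarrow> complex mat" where
  "blkdiag G L Th = mat (G * L) (G * L)
     (\<lambda>(i,j). if i div L = j div L then Th (i div L) $$ (i mod L, j mod L) else 0)"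

definition obj :: "complex mat \<Rightarrow> complex mat \<Rightarrow> complex mat \<Rightarrow> complex mat \<Rightarrow> real" where
  "obj HD HB HF Th = frob2 (HD + HB * Th * HF)"

definition is_svd :: "nat \<Rightarrow> complex mat \<Rightarrow> complex mat \<Rightarrow> complex mat \<Rightarrow> complex mat \<Rightarrow> bool" where
  "is_svd L M U S V \<longleftrightarrow> unitary_mat L U \<and> unitary_mat L V \<and> S \<in> carrier_mat L L \<and>
     (\<forall>i<L. \<forall>j<L. i \<noteq> j \<longrightarrow> S $$ (i,j) = 0) \<and>
     (\<forall>i<L. S $$ (i,i) \<in> \<real> \<and> Re (S $$ (i,i)) \<ge> 0) \<and>
     M = U * S * ctrans V"

definition mat_tendsto :: "(nat \<Rightarrow> complex mat) \<Rightarrow> complex mat \<Rightarrow> bool" where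
  "mat_tendsto X A \<longleftrightarrow> (\<forall>r. X r \<in> carrier_mat (dim_row A) (dim_col A)) \<and>
     (\<forall>i<dim_row A. \<forall>j<dim_col A. (\<lambda>r. X r $$ (i,j)) \<longlonglongrightarrow> A $$ (i,j))"

end

theory Submission
  imports Defs "Jordan_Normal_Form.Determinant"
begin

text \<open>Each block update maximises the objective in the updated block with all other
blocks fixed. Write P for the current residual and B, F for the g-th blocks of \<open>H\<^sub>B\<close>
and \<open>H\<^sub>F\<close>. Replacing the block Z by X gives
\<open>\<parallel>P + B (X - Z) F\<parallel>\<^sup>2 = \<parallel>P\<parallel>\<^sup>2 + \<parallel>B (X - Z) F\<parallel>\<^sup>2 + 2 Re \<langle>X - Z, M\<rangle>\<close>
with \<open>M = B\<^sup>H P F\<^sup>H\<close>, and by von Neumann's trace argument the polar factor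
\<open>X = U V\<^sup>H\<close> of an SVD \<open>M = U S V\<^sup>H\<close> maximises \<open>Re \<langle>X, M\<rangle>\<close> over unitary X.
So the objective never decreases. It is bounded because entries of unitary matrices
have modulus at most 1, hence it converges. A limit of unitary matrices is unitary,
and for unitary \<open>\<Theta>\<close> every N satisfies \<open>N = \<Theta> \<Lambda>\<^sup>H\<close> with \<open>\<Lambda> = N\<^sup>H \<Theta>\<close>.\<close>

lemma ctrans_dim [simp]: "dim_row (ctrans A) = dim_col A" "dim_col (ctrans A) = dim_row A"
  by (simp_all add: ctrans_def)

lemma ctrans_carrier [simp]: "A \<in> carrier_mat n m \<Longrightarrow> ctrans A \<in> carrier_mat m n"
  by (rule carrier_matI) (auto dest: carrier_matD)

lemma ctrans_index [simp]:
  "i < dim_col A \<Longrightarrow> j < dim_row A \<Longrightarrow> ctrans A $$ (i,j) = cnj (A $$ (j,i))"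
  by (simp add: ctrans_def)

lemma ctrans_ctrans [simp]: "ctrans (ctrans A) = A"
  by (intro eq_matI) auto

lemma index_mult_mat_sum:
  "i < dim_row A \<Longrightarrow> j < dim_col B \<Longrightarrow> dim_col A = dim_row B \<Longrightarrow>
    (A * B) $$ (i,j) = (\<Sum>k<dim_row B. A $$ (i,k) * B $$ (k,j))"
  by (simp add: scalar_prod_def atLeast0LessThan)

lemma ctrans_mult:
  assumes A: "A \<in> carrier_mat n p" and B: "B \<in> carrier_mat p m"
  shows "ctrans (A * B) = ctrans B * ctrans A"
proof (rule eq_matI)
  fix i j assume "i < dim_row (ctrans B * ctrans A)" "j < dim_col (ctrans B * ctrans A)"
  with A B have i: "i < m" and j: "j < n" by auto
  with A B show "ctrans (A * B) $$ (i,j) = (ctrans B * ctrans A) $$ (i,j)"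
    by (simp add: index_mult_mat_sum mult.commute del: index_mult_mat(1))
qed (use A B in auto)

lemma unitary_mat_carrier: "unitary_mat L X \<Longrightarrow> X \<in> carrier_mat L L"
  by (simp add: unitary_mat_def)

lemma unitary_mat_right_inverse: "unitary_mat L X \<Longrightarrow> X * ctrans X = 1\<^sub>m L"
  using mat_mult_left_right_inverse[of "ctrans X" L X] by (auto simp: unitary_mat_def)

lemma unitary_mat_ctrans: "unitary_mat L X \<Longrightarrow> unitary_mat L (ctrans X)"
  using unitary_mat_right_inverse[of L X] by (auto simp: unitary_mat_def)

lemma unitary_mat_mult_ctrans:
  assumes "unitary_mat L U" "unitary_mat L V"
  shows "unitary_mat L (U * ctrans V)"
proof -
  have U: "U \<in> carrier_mat L L" and V: "V \<in> carrier_mat L L"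
    and u: "ctrans U * U = 1\<^sub>m L" and v: "V * ctrans V = 1\<^sub>m L"
    using assms unitary_mat_right_inverse[OF assms(2)] by (auto simp: unitary_mat_def)
  have "ctrans (U * ctrans V) * (U * ctrans V) = V * ((ctrans U * U) * ctrans V)"
    using U V by (simp add: ctrans_mult[OF U ctrans_carrier[OF V]] assoc_mult_mat[of _ L L _ L _ L])
  also have "\<dots> = 1\<^sub>m L" using u v V by simp
  finally show ?thesis using U V by (simp add: unitary_mat_def)
qed

lemma unitary_mat_entry_norm_le_1:
  assumes X: "unitary_mat L X" and ij: "i < L" "j < L"
  shows "cmod (X $$ (i,j)) \<le> 1"
proof -
  have Xc: "X \<in> carrier_mat L L" using X by (rule unitary_mat_carrier)
  have "complex_of_real (\<Sum>k<L. (cmod (X $$ (k,j)))\<^sup>2) = (\<Sum>k<L. cnj (X $$ (k,j)) * X $$ (k,j))"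
    by (simp only: of_real_sum complex_norm_square mult.commute)
  also have "\<dots> = (ctrans X * X) $$ (j,j)"
    using Xc ij by (simp add: index_mult_mat_sum del: index_mult_mat(1))
  also have "\<dots> = 1" using X ij by (simp add: unitary_mat_def)
  finally have "(\<Sum>k<L. (cmod (X $$ (k,j)))\<^sup>2) = 1"
    by (metis of_real_eq_1_iff)
  moreover have "(cmod (X $$ (i,j)))\<^sup>2 \<le> (\<Sum>k<L. (cmod (X $$ (k,j)))\<^sup>2)"
    by (rule member_le_sum) (use ij in auto)
  ultimately show ?thesis by (simp add: power_le_one_iff abs_le_square_iff[symmetric])
qed

definition frob_inner :: "complex mat \<Rightarrow> complex mat \<Rightarrow> complex" where
  "frob_inner A B = (\<Sum>i<dim_row A. \<Sum>j<dim_col A. A $$ (i,j) * cnj (B $$ (i,j)))"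

lemma frob_inner_mult_left:
  assumes A: "A \<in> carrier_mat n p" and D: "D \<in> carrier_mat p q" and P: "P \<in> carrier_mat n q"
  shows "frob_inner (A * D) P = frob_inner D (ctrans A * P)"
proof -
  have "frob_inner (A * D) P = (\<Sum>i<n. \<Sum>j<q. \<Sum>k<p. A $$ (i,k) * D $$ (k,j) * cnj (P $$ (i,j)))"
    using A D by (simp add: frob_inner_def index_mult_mat_sum sum_distrib_right del: index_mult_mat(1))
  also have "\<dots> = (\<Sum>k<p. \<Sum>j<q. \<Sum>i<n. A $$ (i,k) * D $$ (k,j) * cnj (P $$ (i,j)))"
    by (subst sum.swap, subst (2) sum.swap, subst sum.swap) (rule refl)
  also have "\<dots> = frob_inner D (ctrans A * P)"
    using A D P
    by (simp add: frob_inner_def index_mult_mat_sum sum_distrib_left mult_ac del: index_mult_mat(1))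
  finally show ?thesis .
qed

lemma frob_inner_mult_right:
  assumes D: "D \<in> carrier_mat n p" and F: "F \<in> carrier_mat p q" and P: "P \<in> carrier_mat n q"
  shows "frob_inner (D * F) P = frob_inner D (P * ctrans F)"
proof -
  have "frob_inner (D * F) P = (\<Sum>i<n. \<Sum>j<q. \<Sum>k<p. D $$ (i,k) * F $$ (k,j) * cnj (P $$ (i,j)))"
    using D F by (simp add: frob_inner_def index_mult_mat_sum sum_distrib_right del: index_mult_mat(1))
  also have "\<dots> = (\<Sum>i<n. \<Sum>k<p. \<Sum>j<q. D $$ (i,k) * F $$ (k,j) * cnj (P $$ (i,j)))"
    by (subst sum.swap) (rule refl)
  also have "\<dots> = frob_inner D (P * ctrans F)"
    using D F P
    by (simp add: frob_inner_def index_mult_mat_sum sum_distrib_left mult_ac del: index_mult_mat(1))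
  finally show ?thesis .
qed

lemma frob_inner_cnj_commute:
  "A \<in> carrier_mat n m \<Longrightarrow> B \<in> carrier_mat n m \<Longrightarrow> frob_inner A B = cnj (frob_inner B A)"
  by (simp add: frob_inner_def cnj_sum mult.commute)

lemma frob_inner_minus_left:
  "A \<in> carrier_mat n m \<Longrightarrow> B \<in> carrier_mat n m \<Longrightarrow>
    frob_inner (A - B) P = frob_inner A P - frob_inner B P"
  by (simp add: frob_inner_def sum_subtractf algebra_simps)

lemma frob_inner_diagonal_left:
  assumes S: "S \<in> carrier_mat L L" and diag: "\<forall>i<L. \<forall>j<L. i \<noteq> j \<longrightarrow> S $$ (i,j) = 0"
  shows "frob_inner S W = (\<Sum>i<L. S $$ (i,i) * cnj (W $$ (i,i)))"
proof -
  have "(\<Sum>j<L. S $$ (i,j) * cnj (W $$ (i,j))) = S $$ (i,i) * cnj (W $$ (i,i))" if "i < L" for i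
    by (subst sum.remove[of _ i]) (use diag that in \<open>auto intro!: sum.neutral\<close>)
  then show ?thesis using S by (simp add: frob_inner_def)
qed

lemma frob2_add:
  assumes "A \<in> carrier_mat n m" "B \<in> carrier_mat n m"
  shows "frob2 (A + B) = frob2 A + frob2 B + 2 * Re (frob_inner B A)"
proof -
  have "(cmod (a + b))\<^sup>2 = (cmod a)\<^sup>2 + (cmod b)\<^sup>2 + 2 * Re (b * cnj a)" for a b
    unfolding cmod_power2 by (simp add: power2_eq_square algebra_simps)
  then show ?thesis
    using assms by (simp add: frob2_def frob_inner_def sum.distrib sum_distrib_left)
qed

lemma frob2_nonneg: "frob2 A \<ge> 0"
  by (simp add: frob2_def sum_nonneg)

section \<open>The orthogonal Procrustes problem\<close>

lemma Re_frob_inner_real_diagonal_left: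
  assumes S: "S \<in> carrier_mat L L" and diag: "\<forall>i<L. \<forall>j<L. i \<noteq> j \<longrightarrow> S $$ (i,j) = 0"
    and real: "\<forall>i<L. S $$ (i,i) \<in> \<real>"
  shows "Re (frob_inner S W) = (\<Sum>i<L. Re (S $$ (i,i)) * Re (W $$ (i,i)))"
proof -
  have "Re (S $$ (i,i) * cnj (W $$ (i,i))) = Re (S $$ (i,i)) * Re (W $$ (i,i))" if "i < L" for i
    using real that by (auto elim!: Reals_cases)
  then show ?thesis
    unfolding frob_inner_diagonal_left[OF S diag] Re_sum by (intro sum.cong) auto
qed

lemma frob_inner_svd_left:
  assumes svd: "is_svd L M U S V" and Y: "Y \<in> carrier_mat L L"
  shows "frob_inner M Y = frob_inner S (ctrans U * Y * V)"
proof -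
  have U: "U \<in> carrier_mat L L" and V: "V \<in> carrier_mat L L" and S: "S \<in> carrier_mat L L"
    and M: "M = U * S * ctrans V"
    using svd by (auto simp: is_svd_def unitary_mat_def)
  have "frob_inner M Y = frob_inner (U * (S * ctrans V)) Y"
    using M U S V by (simp add: assoc_mult_mat[of _ L L _ L _ L])
  also have "\<dots> = frob_inner (S * ctrans V) (ctrans U * Y)"
    using U S V Y by (intro frob_inner_mult_left) auto
  also have "\<dots> = frob_inner S (ctrans U * Y * V)"
    using S V U Y by (subst frob_inner_mult_right) auto
  finally show ?thesis .
qed

text \<open>Von Neumann's argument: with \<open>W = U\<^sup>H X V\<close> unitary,
\<open>Re \<langle>X, M\<rangle> = \<Sum>\<^sub>i s\<^sub>i Re W\<^sub>i\<^sub>i\<close> and every \<open>Re W\<^sub>i\<^sub>i \<le> 1\<close>, with equality for \<open>X = U V\<^sup>H\<close>.\<close>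

lemma svd_polar_factor_maximizes:
  assumes svd: "is_svd L M U S V" and X: "unitary_mat L X"
  shows "Re (frob_inner X M) \<le> Re (frob_inner (U * ctrans V) M)"
proof -
  have uU: "unitary_mat L U" and uV: "unitary_mat L V" and S: "S \<in> carrier_mat L L"
    and diag: "\<forall>i<L. \<forall>j<L. i \<noteq> j \<longrightarrow> S $$ (i,j) = 0"
    and sv: "\<forall>i<L. S $$ (i,i) \<in> \<real> \<and> Re (S $$ (i,i)) \<ge> 0"
    and M: "M = U * S * ctrans V"
    using svd by (auto simp: is_svd_def)
  have U: "U \<in> carrier_mat L L" and V: "V \<in> carrier_mat L L" and Xc: "X \<in> carrier_mat L L"
    using uU uV X by (simp_all add: unitary_mat_carrier)
  have Mc: "M \<in> carrier_mat L L" using M U S V by auto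
  note Re_S_inner = Re_frob_inner_real_diagonal_left[OF S diag] sv
  define W where "W = ctrans U * X * V"
  have "unitary_mat L (ctrans U * ctrans (ctrans X) * ctrans (ctrans V))"
    by (intro unitary_mat_mult_ctrans unitary_mat_ctrans uU uV X)
  then have uW: "unitary_mat L W" by (simp add: W_def)
  have polar_one: "ctrans U * (U * ctrans V) * V = 1\<^sub>m L"
  proof -
    have "ctrans U * (U * ctrans V) = (ctrans U * U) * ctrans V"
      using U V by (simp add: assoc_mult_mat[of _ L L _ L _ L])
    then show ?thesis using uU uV V by (simp add: unitary_mat_def)
  qed
  have "Re (frob_inner X M) = Re (frob_inner M X)"
    using frob_inner_cnj_commute[OF Xc Mc] by simp
  also have "\<dots> = (\<Sum>i<L. Re (S $$ (i,i)) * Re (W $$ (i,i)))"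
    by (simp add: frob_inner_svd_left[OF svd Xc] Re_S_inner W_def)
  also have "\<dots> \<le> (\<Sum>i<L. Re (S $$ (i,i)))"
  proof (rule sum_mono)
    fix i assume i: "i \<in> {..<L}"
    have "Re (W $$ (i,i)) \<le> 1"
      using unitary_mat_entry_norm_le_1[OF uW] i complex_Re_le_cmod[of "W $$ (i,i)"] by force
    then show "Re (S $$ (i,i)) * Re (W $$ (i,i)) \<le> Re (S $$ (i,i))"
      using sv i by (simp add: mult_left_le)
  qed
  also have "\<dots> = Re (frob_inner M (U * ctrans V))"
    using U V by (simp add: frob_inner_svd_left[OF svd] polar_one Re_S_inner)
  also have "\<dots> = Re (frob_inner (U * ctrans V) M)"
    using U V Mc by (simp add: frob_inner_cnj_commute[of M L L])
  finally show ?thesis .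
qed

lemma frob2_polar_update_mono:
  assumes P: "P \<in> carrier_mat n m" and B: "B \<in> carrier_mat n L" and F: "F \<in> carrier_mat L m"
    and Z: "unitary_mat L Z" and svd: "is_svd L (ctrans B * P * ctrans F) U S V"
  shows "frob2 P \<le> frob2 (P + B * (U * ctrans V - Z) * F)"
proof -
  have U: "U \<in> carrier_mat L L" and V: "V \<in> carrier_mat L L" and Zc: "Z \<in> carrier_mat L L"
    using svd Z by (auto simp: is_svd_def unitary_mat_carrier)
  define D where "D = U * ctrans V - Z"
  have D: "D \<in> carrier_mat L L" using U V Zc by (simp add: D_def minus_carrier_mat)
  have "frob_inner (B * D * F) P = frob_inner (B * D) (P * ctrans F)"
    using B D F P by (intro frob_inner_mult_right) auto
  also have "\<dots> = frob_inner D (ctrans B * (P * ctrans F))"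
    using B D F P by (intro frob_inner_mult_left) auto
  also have "\<dots> = frob_inner (U * ctrans V) (ctrans B * P * ctrans F)
      - frob_inner Z (ctrans B * P * ctrans F)"
    using B P F U V Zc
    by (simp add: D_def frob_inner_minus_left[of _ L L]
      assoc_mult_mat[of "ctrans B" L n P m "ctrans F" L])
  finally have "0 \<le> Re (frob_inner (B * D * F) P)"
    using svd_polar_factor_maximizes[OF svd Z] by simp
  then have "frob2 P \<le> frob2 P + frob2 (B * D * F) + 2 * Re (frob_inner (B * D * F) P)"
    using frob2_nonneg[of "B * D * F"] by linarith
  also have "\<dots> = frob2 (P + B * D * F)"
    using B D F P by (simp add: frob2_add)
  finally show ?thesis by (simp add: D_def)
qed

lemma blkdiag_dim [simp]: "dim_row (blkdiag G L T) = G * L" "dim_col (blkdiag G L T) = G * L"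
  by (simp_all add: blkdiag_def)

lemma col_block_dim [simp]: "dim_row (col_block L HB g) = dim_row HB" "dim_col (col_block L HB g) = L"
  by (simp_all add: col_block_def)

lemma row_block_dim [simp]: "dim_row (row_block L HF g) = L" "dim_col (row_block L HF g) = dim_col HF"
  by (simp_all add: row_block_def)

lemma blkdiag_carrier [simp]: "blkdiag G L T \<in> carrier_mat (G * L) (G * L)"
  by (rule carrier_matI) simp_all

lemma col_block_carrier: "HB \<in> carrier_mat n m \<Longrightarrow> col_block L HB g \<in> carrier_mat n L"
  by (rule carrier_matI) simp_all

lemma row_block_carrier: "HF \<in> carrier_mat n m \<Longrightarrow> row_block L HF g \<in> carrier_mat L m"
  by (rule carrier_matI) simp_all

lemma blkdiag_cong: "(\<And>k. k < G \<Longrightarrow> T k = T' k) \<Longrightarrow> blkdiag G L T = blkdiag G L T'"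
  unfolding blkdiag_def by (intro eq_matI) (auto simp: less_mult_imp_div_less)

lemma blkdiag_minus:
  assumes "\<And>k. k < G \<Longrightarrow> T k \<in> carrier_mat L L \<and> T' k \<in> carrier_mat L L"
  shows "blkdiag G L T' - blkdiag G L T = blkdiag G L (\<lambda>k. T' k - T k)"
proof (rule eq_matI)
  fix i j
  assume "i < dim_row (blkdiag G L (\<lambda>k. T' k - T k))"
    and "j < dim_col (blkdiag G L (\<lambda>k. T' k - T k))"
  then have "i < G * L" "j < G * L" by auto
  moreover from this have "0 < L" by (cases "L = 0") auto
  ultimately show "(blkdiag G L T' - blkdiag G L T) $$ (i,j) = blkdiag G L (\<lambda>k. T' k - T k) $$ (i,j)"
    using assms[of "i div L"] by (auto simp: blkdiag_def less_mult_imp_div_less)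
qed auto

lemma sum_div_eq_block:
  fixes f :: "nat \<Rightarrow> 'a::comm_monoid_add"
  assumes g: "g < G"
  shows "(\<Sum>a<G * L. if a div L = g then f a else 0) = (\<Sum>r<L. f (g * L + r))"
proof -
  have "{a \<in> {..<G * L}. a div L = g} = (\<lambda>r. g * L + r) ` {..<L}"
  proof (intro equalityI subsetI)
    fix a assume a: "a \<in> {a \<in> {..<G * L}. a div L = g}"
    then have "0 < L" by (cases "L = 0") auto
    with a have "a = g * L + a mod L" "a mod L < L"
      by (auto simp: mult.commute)
    then show "a \<in> (\<lambda>r. g * L + r) ` {..<L}" by blast
  next
    fix a assume "a \<in> (\<lambda>r. g * L + r) ` {..<L}"
    then obtain r where r: "r < L" "a = g * L + r" by auto
    have "g * L + r < Suc g * L" using r by simp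
    also have "\<dots> \<le> G * L" using g by (intro mult_right_mono) auto
    finally show "a \<in> {a \<in> {..<G * L}. a div L = g}" using r by simp
  qed
  then show ?thesis
    by (simp add: sum.inter_filter[symmetric] sum.reindex inj_on_def)
qed

lemma mult_blkdiag_single_block:
  assumes g: "g < G" and D: "D \<in> carrier_mat L L"
    and HB: "HB \<in> carrier_mat NR (G * L)" and HF: "HF \<in> carrier_mat (G * L) NT"
  shows "HB * blkdiag G L ((\<lambda>_. 0\<^sub>m L L)(g := D)) * HF = col_block L HB g * D * row_block L HF g"
proof (rule eq_matI)
  let ?E = "blkdiag G L ((\<lambda>_. 0\<^sub>m L L)(g := D))" and ?BD = "col_block L HB g * D"
  fix i j assume "i < dim_row (?BD * row_block L HF g)" "j < dim_col (?BD * row_block L HF g)"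
  then have i: "i < NR" and j: "j < NT" using HB HF by auto
  have E: "?E $$ (a,b) = (if a div L = g \<and> b div L = g then D $$ (a mod L, b mod L) else 0)"
    if "a < G * L" "b < G * L" for a b
  proof -
    from that have "0 < L" by (cases "L = 0") auto
    with that show ?thesis by (auto simp: blkdiag_def)
  qed
  have BE: "(HB * ?E) $$ (i,b) = (if b div L = g then ?BD $$ (i, b mod L) else 0)"
    if b: "b < G * L" for b
  proof -
    have L: "0 < L" using b by (cases "L = 0") auto
    have "(HB * ?E) $$ (i,b) =
        (\<Sum>a<G * L. if a div L = g
          then HB $$ (i,a) * (if b div L = g then D $$ (a mod L, b mod L) else 0) else 0)"
      using HB i b by (simp add: index_mult_mat_sum E del: index_mult_mat(1)) (intro sum.cong, auto)
    also have "\<dots> = (\<Sum>r<L. HB $$ (i, g * L + r) * (if b div L = g then D $$ (r, b mod L) else 0))"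
      by (simp add: sum_div_eq_block[OF g]) (rule sum.cong; simp)
    also have "\<dots> = (if b div L = g then ?BD $$ (i, b mod L) else 0)"
      using HB D i L by (simp add: index_mult_mat_sum col_block_def del: index_mult_mat(1))
    finally show ?thesis .
  qed
  have "(HB * ?E * HF) $$ (i,j) = (\<Sum>b<G * L. (HB * ?E) $$ (i,b) * HF $$ (b,j))"
    using HB HF i j by (subst index_mult_mat_sum) auto
  also have "\<dots> = (\<Sum>b<G * L. if b div L = g then ?BD $$ (i, b mod L) * HF $$ (b,j) else 0)"
    by (rule sum.cong) (simp_all add: BE)
  also have "\<dots> = (\<Sum>s<L. ?BD $$ (i,s) * HF $$ (g * L + s, j))"
    by (simp add: sum_div_eq_block[OF g])
  also have "\<dots> = (?BD * row_block L HF g) $$ (i,j)"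
    using HB HF D i j by (simp add: index_mult_mat_sum row_block_def del: index_mult_mat(1))
  finally show "(HB * ?E * HF) $$ (i,j) = (?BD * row_block L HF g) $$ (i,j)" .
qed (use HB HF in auto)

lemma add_mult_mult_update:
  fixes HD HB HF X Y :: "'a :: ring mat"
  assumes HD: "HD \<in> carrier_mat n m" and HB: "HB \<in> carrier_mat n k" and HF: "HF \<in> carrier_mat k m"
    and X: "X \<in> carrier_mat k k" and Y: "Y \<in> carrier_mat k k"
  shows "HD + HB * Y * HF = (HD + HB * X * HF) + HB * (Y - X) * HF"
proof -
  have "HB * (Y - X) * HF = HB * Y * HF - HB * X * HF"
    using HB HF X Y by (simp add: mult_minus_distrib_mat[of HB n k Y k X] minus_mult_distrib_mat[of _ n k _ _ m])
  then show ?thesis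
    using HD HB HF X Y by (intro eq_matI) auto
qed

lemma obj_block_update_mono:
  assumes HD: "HD \<in> carrier_mat NR NT" and HB: "HB \<in> carrier_mat NR (G * L)"
    and HF: "HF \<in> carrier_mat (G * L) NT"
    and g: "g < G" and T: "\<forall>k<G. unitary_mat L (T k)"
    and svd: "is_svd L (ctrans (col_block L HB g) * (HD + HB * blkdiag G L T * HF) *
      ctrans (row_block L HF g)) U S V"
  shows "obj HD HB HF (blkdiag G L T) \<le> obj HD HB HF (blkdiag G L (T(g := U * ctrans V)))"
proof -
  let ?X = "U * ctrans V" and ?B = "col_block L HB g" and ?F = "row_block L HF g"
  let ?T' = "T(g := ?X)"
  define P where "P = HD + HB * blkdiag G L T * HF"
  have P: "P \<in> carrier_mat NR NT"
    unfolding P_def using HB HF by (meson add_carrier_mat mult_carrier_mat blkdiag_carrier)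
  have B: "?B \<in> carrier_mat NR L" and F: "?F \<in> carrier_mat L NT"
    using HB HF by (simp_all add: col_block_carrier row_block_carrier)
  have "unitary_mat L ?X" using svd by (simp add: is_svd_def unitary_mat_mult_ctrans)
  then have Tc: "T k \<in> carrier_mat L L \<and> ?T' k \<in> carrier_mat L L" if "k < G" for k
    using T that by (simp add: unitary_mat_carrier)
  have "blkdiag G L ?T' - blkdiag G L T = blkdiag G L ((\<lambda>_. 0\<^sub>m L L)(g := ?X - T g))"
    using Tc by (simp add: blkdiag_minus) (rule blkdiag_cong, auto)
  then have "HD + HB * blkdiag G L ?T' * HF = P + ?B * (?X - T g) * ?F"
    using add_mult_mult_update[OF HD HB HF blkdiag_carrier[of G L T] blkdiag_carrier[of G L ?T']]
      mult_blkdiag_single_block[OF g _ HB HF] Tc[OF g]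
    by (simp add: P_def minus_carrier_mat)
  moreover have "frob2 P \<le> frob2 (P + ?B * (?X - T g) * ?F)"
    using frob2_polar_update_mono[OF P B F _ svd[folded P_def]] T g by simp
  ultimately show ?thesis by (simp add: obj_def P_def)
qed

section \<open>Boundedness of the objective\<close>

lemma norm_mult_entry_le:
  assumes "i < dim_row A" "j < dim_col B" "dim_col A = dim_row B"
  shows "cmod ((A * B) $$ (i,j)) \<le> (\<Sum>k<dim_row B. cmod (A $$ (i,k)) * cmod (B $$ (k,j)))"
  unfolding index_mult_mat_sum[OF assms] by (rule order_trans[OF norm_sum]) (simp add: norm_mult)

lemma norm_sandwich_entry_le:
  assumes HB: "HB \<in> carrier_mat p n" and X: "X \<in> carrier_mat n n" and HF: "HF \<in> carrier_mat n q"
    and X_le: "\<forall>a<n. \<forall>b<n. cmod (X $$ (a,b)) \<le> 1" and ij: "i < p" "j < q"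
  shows "cmod ((HB * X * HF) $$ (i,j)) \<le> (\<Sum>b<n. (\<Sum>a<n. cmod (HB $$ (i,a))) * cmod (HF $$ (b,j)))"
proof -
  have "cmod ((HB * X * HF) $$ (i,j)) \<le> (\<Sum>b<n. cmod ((HB * X) $$ (i,b)) * cmod (HF $$ (b,j)))"
    using norm_mult_entry_le[of i "HB * X" j HF] HB X HF ij by simp
  also have "\<dots> \<le> (\<Sum>b<n. (\<Sum>a<n. cmod (HB $$ (i,a))) * cmod (HF $$ (b,j)))"
  proof (intro sum_mono mult_right_mono)
    fix b assume b: "b \<in> {..<n}"
    have "cmod ((HB * X) $$ (i,b)) \<le> (\<Sum>a<n. cmod (HB $$ (i,a)) * cmod (X $$ (a,b)))"
      using norm_mult_entry_le[of i HB b X] HB X ij b by simp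
    also have "\<dots> \<le> (\<Sum>a<n. cmod (HB $$ (i,a)))"
      using X_le b by (intro sum_mono) (simp add: mult_left_le)
    finally show "cmod ((HB * X) $$ (i,b)) \<le> (\<Sum>a<n. cmod (HB $$ (i,a)))" .
  qed simp
  finally show ?thesis .
qed

lemma frob2_sandwich_bounded:
  assumes HD: "HD \<in> carrier_mat p q" and HB: "HB \<in> carrier_mat p n" and HF: "HF \<in> carrier_mat n q"
  shows "\<exists>C. \<forall>X \<in> carrier_mat n n. (\<forall>a<n. \<forall>b<n. cmod (X $$ (a,b)) \<le> 1) \<longrightarrow>
    frob2 (HD + HB * X * HF) \<le> C"
proof -
  define c where
    "c i j = cmod (HD $$ (i,j)) + (\<Sum>b<n. (\<Sum>a<n. cmod (HB $$ (i,a))) * cmod (HF $$ (b,j)))" for i j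
  have "frob2 (HD + HB * X * HF) \<le> (\<Sum>i<p. \<Sum>j<q. (c i j)\<^sup>2)"
    if X: "X \<in> carrier_mat n n" and X_le: "\<forall>a<n. \<forall>b<n. cmod (X $$ (a,b)) \<le> 1" for X
  proof -
    have "frob2 (HD + HB * X * HF) = (\<Sum>i<p. \<Sum>j<q. (cmod (HD $$ (i,j) + (HB * X * HF) $$ (i,j)))\<^sup>2)"
      using HD HB HF X by (simp add: frob2_def)
    also have "\<dots> \<le> (\<Sum>i<p. \<Sum>j<q. (c i j)\<^sup>2)"
    proof (intro sum_mono power_mono)
      fix i j assume "i \<in> {..<p}" "j \<in> {..<q}"
      then have "cmod ((HB * X * HF) $$ (i,j))
          \<le> (\<Sum>b<n. (\<Sum>a<n. cmod (HB $$ (i,a))) * cmod (HF $$ (b,j)))"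
        by (intro norm_sandwich_entry_le[OF HB X HF X_le]) auto
      then show "cmod (HD $$ (i,j) + (HB * X * HF) $$ (i,j)) \<le> c i j"
        using norm_triangle_ineq[of "HD $$ (i,j)" "(HB * X * HF) $$ (i,j)"]
        unfolding c_def by linarith
    qed simp
    finally show ?thesis .
  qed
  then show ?thesis by blast
qed

lemma blkdiag_entry_norm_le_1:
  assumes T: "\<forall>k<G. unitary_mat L (T k)" and ab: "a < G * L" "b < G * L"
  shows "cmod (blkdiag G L T $$ (a,b)) \<le> 1"
proof -
  from ab have "0 < L" by (cases "L = 0") auto
  then show ?thesis
    using T ab unitary_mat_entry_norm_le_1[of L "T (a div L)" "a mod L" "b mod L"]
    by (auto simp: blkdiag_def less_mult_imp_div_less)
qed

lemma obj_blkdiag_bounded: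
  assumes HD: "HD \<in> carrier_mat NR NT" and HB: "HB \<in> carrier_mat NR (G * L)"
    and HF: "HF \<in> carrier_mat (G * L) NT"
  shows "\<exists>C. \<forall>T. (\<forall>k<G. unitary_mat L (T k)) \<longrightarrow> obj HD HB HF (blkdiag G L T) \<le> C"
proof -
  obtain C where C: "\<forall>X \<in> carrier_mat (G * L) (G * L).
      (\<forall>a<G * L. \<forall>b<G * L. cmod (X $$ (a,b)) \<le> 1) \<longrightarrow> frob2 (HD + HB * X * HF) \<le> C"
    using frob2_sandwich_bounded[OF HD HB HF] by blast
  have "obj HD HB HF (blkdiag G L T) \<le> C" if "\<forall>k<G. unitary_mat L (T k)" for T
    using C blkdiag_entry_norm_le_1[OF that] by (simp add: obj_def)
  then show ?thesis by blast
qed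

section \<open>Unitary limits and stationarity\<close>

lemma unitary_mat_limit:
  assumes lim: "mat_tendsto X A" and X: "\<forall>r. unitary_mat L (X r)"
  shows "unitary_mat L A"
proof -
  have "X 0 \<in> carrier_mat (dim_row A) (dim_col A)"
    using lim unfolding mat_tendsto_def by blast
  moreover have "X 0 \<in> carrier_mat L L"
    using X unitary_mat_carrier by blast
  ultimately have A: "A \<in> carrier_mat L L"
    by (metis carrier_matD carrier_matI)
  have conv: "(\<lambda>r. X r $$ (k,l)) \<longlonglongrightarrow> A $$ (k,l)" if "k < L" "l < L" for k l
    using lim A that by (simp add: mat_tendsto_def)
  have "(ctrans A * A) $$ (i,j) = 1\<^sub>m L $$ (i,j)" if ij: "i < L" "j < L" for i j
  proof -
    have entry: "(ctrans Y * Y) $$ (i,j) = (\<Sum>k<L. cnj (Y $$ (k,i)) * Y $$ (k,j))"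
      if "Y \<in> carrier_mat L L" for Y
      using that ij by (simp add: index_mult_mat_sum del: index_mult_mat(1))
    have "(\<lambda>r. \<Sum>k<L. cnj (X r $$ (k,i)) * X r $$ (k,j))
        \<longlonglongrightarrow> (\<Sum>k<L. cnj (A $$ (k,i)) * A $$ (k,j))"
      using ij by (intro tendsto_sum tendsto_mult tendsto_cnj conv) auto
    moreover have "(\<Sum>k<L. cnj (X r $$ (k,i)) * X r $$ (k,j)) = 1\<^sub>m L $$ (i,j)" for r
      using X entry[of "X r"] by (simp add: unitary_mat_def)
    ultimately show ?thesis by (simp add: entry[OF A] LIMSEQ_const_iff)
  qed
  then have "ctrans A * A = 1\<^sub>m L"
    using A by (intro eq_matI) auto
  then show ?thesis using A by (simp add: unitary_mat_def)
qed

lemma unitary_stationarity_multiplier: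
  assumes Th: "unitary_mat L Th" and N: "N \<in> carrier_mat L L"
  shows "N - Th * ctrans (ctrans N * Th) = 0\<^sub>m L L"
proof -
  have Thc: "Th \<in> carrier_mat L L" using Th by (rule unitary_mat_carrier)
  have "Th * ctrans (ctrans N * Th) = (Th * ctrans Th) * N"
    using Thc N by (simp add: ctrans_mult[of _ L L _ L] assoc_mult_mat[of _ L L _ L _ L])
  then show ?thesis using N by (simp add: unitary_mat_right_inverse[OF Th])
qed

section \<open>The block-coordinate ascent iteration\<close>

locale block_polar_ascent =
  fixes NR NT G L :: nat
    and HD HB HF :: "complex mat"
    and Th M :: "nat \<Rightarrow> nat \<Rightarrow> complex mat"
  assumes HD: "HD \<in> carrier_mat NR NT"
    and HB: "HB \<in> carrier_mat NR (G * L)"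
    and HF: "HF \<in> carrier_mat (G * L) NT"
    and init: "\<forall>g<G. unitary_mat L (Th 0 g)"
    and Mdef: "\<forall>r g. g < G \<longrightarrow>
        M r g = ctrans (col_block L HB g) *
          (HD + HB * blkdiag G L (\<lambda>k. if k < g then Th (Suc r) k else Th r k) * HF) *
          ctrans (row_block L HF g)"
    and upd: "\<forall>r g. g < G \<longrightarrow>
        (\<exists>U S V. is_svd L (M r g) U S V \<and> Th (Suc r) g = U * ctrans V)"
begin

lemma iterate_unitary:
  assumes g: "g < G"
  shows "unitary_mat L (Th r g)"
proof (cases r)
  case 0
  then show ?thesis using init g by simp
next
  case (Suc r')
  from upd g obtain U S V where "is_svd L (M r' g) U S V" "Th (Suc r') g = U * ctrans V" by blast
  then show ?thesis using Suc by (simp add: is_svd_def unitary_mat_mult_ctrans)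
qed

lemma obj_sweep_mono:
  "g \<le> G \<Longrightarrow> obj HD HB HF (blkdiag G L (Th r))
    \<le> obj HD HB HF (blkdiag G L (\<lambda>k. if k < g then Th (Suc r) k else Th r k))"
proof (induction g)
  case 0
  then show ?case by simp
next
  case (Suc g)
  let ?T = "\<lambda>k. if k < g then Th (Suc r) k else Th r k"
  from Suc.prems upd obtain U S V where svd: "is_svd L (M r g) U S V"
    and Th_upd: "Th (Suc r) g = U * ctrans V" by (meson Suc_le_lessD)
  have "obj HD HB HF (blkdiag G L ?T) \<le> obj HD HB HF (blkdiag G L (?T(g := U * ctrans V)))"
    using Suc.prems svd Mdef iterate_unitary
    by (intro obj_block_update_mono[OF HD HB HF]) auto
  also have "?T(g := U * ctrans V) = (\<lambda>k. if k < Suc g then Th (Suc r) k else Th r k)"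
    using Th_upd by auto
  finally show ?case using Suc by simp
qed

lemma obj_incseq: "incseq (\<lambda>r. obj HD HB HF (blkdiag G L (Th r)))"
proof (rule incseq_SucI)
  fix r
  have "blkdiag G L (\<lambda>k. if k < G then Th (Suc r) k else Th r k) = blkdiag G L (Th (Suc r))"
    by (rule blkdiag_cong) simp
  then show "obj HD HB HF (blkdiag G L (Th r)) \<le> obj HD HB HF (blkdiag G L (Th (Suc r)))"
    using obj_sweep_mono[of G r] by simp
qed

lemma obj_convergent: "convergent (\<lambda>r. obj HD HB HF (blkdiag G L (Th r)))"
proof -
  obtain C where "\<forall>T. (\<forall>k<G. unitary_mat L (T k)) \<longrightarrow> obj HD HB HF (blkdiag G L T) \<le> C"
    using obj_blkdiag_bounded[OF HD HB HF] by blast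
  then have "\<forall>r. obj HD HB HF (blkdiag G L (Th r)) \<le> C"
    using iterate_unitary by blast
  then show ?thesis
    by (rule incseq_convergent[OF obj_incseq]) (auto simp: convergent_def)
qed

lemma limit_stationary:
  assumes lim: "\<forall>g<G. mat_tendsto (\<lambda>r. Th r g) (Thlim g)" and g: "g < G"
  shows "\<exists>Lam. Lam \<in> carrier_mat L L \<and>
    ctrans (col_block L HB g) * (HD + HB * blkdiag G L Thlim * HF) * ctrans (row_block L HF g)
      - Thlim g * ctrans Lam = 0\<^sub>m L L"
proof -
  let ?N = "ctrans (col_block L HB g) * (HD + HB * blkdiag G L Thlim * HF) * ctrans (row_block L HF g)"
  have Thlim: "unitary_mat L (Thlim g)"
    using lim g iterate_unitary by (intro unitary_mat_limit) auto
  have N: "?N \<in> carrier_mat L L"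
    using HB HF col_block_carrier[OF HB] row_block_carrier[OF HF]
    by (meson add_carrier_mat mult_carrier_mat blkdiag_carrier ctrans_carrier)
  show ?thesis
    using unitary_stationarity_multiplier[OF Thlim N] N unitary_mat_carrier[OF Thlim]
    by (intro exI[of _ "ctrans ?N * Thlim g"]) auto
qed

end

theorem proposition5:
  fixes NT NR G L :: nat
    and HD HB HF :: "complex mat"
    and Th :: "nat \<Rightarrow> nat \<Rightarrow> complex mat"
    and M :: "nat \<Rightarrow> nat \<Rightarrow> complex mat"
  assumes pos: "NT > 0" "NR > 0" "G > 0" "L > 0"
    and HD: "HD \<in> carrier_mat NR NT"
    and HB: "HB \<in> carrier_mat NR (G * L)"
    and HF: "HF \<in> carrier_mat (G * L) NT"
    and init: "\<forall>g<G. unitary_mat L (Th 0 g)"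
    and Mdef: "\<forall>r g. g < G \<longrightarrow>
        M r g = ctrans (col_block L HB g) *
          (HD + HB * blkdiag G L (\<lambda>k. if k < g then Th (Suc r) k else Th r k) * HF) *
          ctrans (row_block L HF g)"
    and upd: "\<forall>r g. g < G \<longrightarrow>
        (\<exists>U S V. is_svd L (M r g) U S V \<and> Th (Suc r) g = U * ctrans V)"
  shows "incseq (\<lambda>r. obj HD HB HF (blkdiag G L (Th r))) \<and>
         convergent (\<lambda>r. obj HD HB HF (blkdiag G L (Th r))) \<and>
         (\<forall>Mlim Thlim.
            (\<forall>g<G. mat_tendsto (\<lambda>r. M r g) (Mlim g)
                   \<and> mat_tendsto (\<lambda>r. Th r g) (Thlim g)) \<longrightarrow>
            (\<forall>g<G. \<exists>Lam. Lam \<in> carrier_mat L L \<and>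
               ctrans (col_block L HB g) * (HD + HB * blkdiag G L Thlim * HF) *
                 ctrans (row_block L HF g) - Thlim g * ctrans Lam = 0\<^sub>m L L))"
proof -
  interpret block_polar_ascent NR NT G L HD HB HF Th M
    using HD HB HF init Mdef upd by unfold_locales
  show ?thesis
    using obj_incseq obj_convergent limit_stationary by blast
qed

end
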